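(* Let $(M,\mathtt{g},\nabla)$ be a four-dimensional Riemann–Cartan spacetime, let $\{x^\mu\}$ be local coordinates, $\{\theta^{\mathbf{a}}\}$ an orthonormal coframe with $\theta^{\mathbf{a}}=h^{\mathbf{a}}_\mu dx^\mu$ and dual frame $e_{\mathbf{a}}=h^\mu_{\mathbf{a}}\partial_\mu$, and $\mathfrak{h}=\det(h^{\mathbf{a}}_\mu)$ (so $\sqrt{|\det\mathtt{g}|}=\mathfrak{h}^{-1}$ in the paper's convention). For an even section $\psi$ of $\mathcal{C}\ell(M,g)$ consider the Lagrangian density $$\mathfrak{L}(x,\psi,\partial\psi)=\Big[\big(\theta^{\mathbf{a}}\nabla^{(s)}_{e_{\mathbf{a}}}\psi\,\theta^{0}\theta^{2}\theta^{1}\big)\cdot\psi-m\,\psi\cdot\psi\Big]\mathfrak{h}^{-1},\qquad \nabla^{(s)}_{e_{\mathbf{a}}}\psi=\partial_{e_{\mathbf{a}}}\psi+\tfrac12\omega_{e_{\mathbf{a}}}\psi,$$ with $m$ a real constant. Then the Euler–Lagrange equation $\partial_\psi\mathfrak{L}-\partial_\mu(\partial_{\partial_\mu\psi}\mathfrak{L})=0$ is equivalent to $$\theta^{\mathbf{a}}\nabla^{(s)}_{e_{\mathbf{a}}}\psi\,\theta^{0}\theta^{2}\theta^{1}+\tfrac12 T\psi\,\theta^{0}\theta^{2}\theta^{1}-m\psi=0,$$ equivalently (multiplying on the right by $\theta^0$) $\theta^{\mathbf{a}}\nabla^{(s)}_{e_{\mathbf{a}}}\psi\,\theta^2\theta^1+\tfrac12T\psi\,\theta^2\theta^1-m\psi\theta^0=0$,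 where $T=T^{\ \mathbf{b}}_{\mathbf{ab}}\theta^{\mathbf{a}}$ is the torsion covector. In particular, when $\nabla$ is torsion free ($T=0$) this reduces to the free Dirac–Hestenes equation.
   Context: A Riemann–Cartan spacetime is a four-dimensional oriented, time-oriented Lorentzian manifold $(M,\mathtt{g})$ (signature $(1,3)$) with a metric-compatible connection $\nabla$, possibly with curvature and torsion; $\nabla$ also acts on the Clifford bundle $\mathcal{C}\ell(M,g)$ (Clifford algebras of $(T_x^*M,g_x)$, product by juxtaposition). $\omega_{e_{\mathbf{a}}}=\frac12\omega_{\mathbf{a}}^{\ \mathbf{bc}}\theta_{\mathbf{b}}\wedge\theta_{\mathbf{c}}$ where $\nabla_{e_{\mathbf{a}}}\theta^{\mathbf{b}}=-\omega_{\mathbf{a}}^{\ \mathbf{bc}}\theta_{\mathbf{c}}$, $\{\theta_{\mathbf{a}}\}$ the reciprocal coframe; equivalently $\nabla_{e_{\mathbf{a}}}e_{\mathbf{b}}=\omega^{\ \mathbf{c}}_{\mathbf{ab}}e_{\mathbf{c}}$. $\partial_{e_{\mathbf{a}}}$ is the Pfaff derivative ($\partial_{e_{\mathbf{a}}}(A^I\theta_I)=e_{\mathbf{a}}(A^I)\theta_I$). The scalar product of Clifford fields is $X\cdot Y=\langle\tilde XY\rangle_0$ extended so that different grades are orthogonal. $[e_{\mathbf{a}},e_{\mathbf{b}}]=c^{\ \mathbf{c}}_{\mathbf{ab}}e_{\mathbf{c}}$, and the torsion components are $T^{\ \mathbf{c}}_{\mathbf{ab}}=\omega^{\ \mathbf{c}}_{\mathbf{ab}}-\omega^{\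 \mathbf{c}}_{\mathbf{ba}}-c^{\ \mathbf{c}}_{\mathbf{ab}}$, i.e. $\nabla_{e_{\mathbf{a}}}e_{\mathbf{b}}-\nabla_{e_{\mathbf{b}}}e_{\mathbf{a}}-[e_{\mathbf{a}},e_{\mathbf{b}}]=T^{\ \mathbf{c}}_{\mathbf{ab}}e_{\mathbf{c}}$. $\partial_\psi$ and $\partial_{\partial_\mu\psi}$ denote the multivector (variational) derivatives with respect to the even Clifford field $\psi$ and its coordinate derivatives $\partial_\mu\psi$, the Lagrangian being regarded as a function of $\psi$ and $\partial_\mu\psi$ via $\partial_{e_{\mathbf{a}}}\psi=h^\mu_{\mathbf{a}}\partial_\mu\psi$. *)

theory Defs
  imports "HOL-Analysis.Analysis"
begin

text \<open>Coordinates x are points of real^4 (a chart domain U).  The Clifford algebra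
  Cl(1,3) of a cotangent space is represented via the orthonormal coframe
  theta^0..theta^3 (upper indices) as the 16-dimensional space real^(4 set):
  the component at K is the coefficient of the basis blade theta^K
  (product of the theta^k, k in K, in increasing order).\<close>

type_synonym mv = "real ^ (4 set)"

definition eta :: "4 \<Rightarrow> real" where
  "eta k = (if k = 0 then 1 else -1)"

text \<open>Sign of the product of basis blades: theta^I theta^J = blade_sign I J theta^(I sym-diff J).\<close>
definition blade_sign :: "4 set \<Rightarrow> 4 set \<Rightarrow> real" where
  "blade_sign I J = (-1) ^ card {(i, j). i \<in> I \<and> j \<in> J \<and> j < i} * (\<Prod>k\<in>I \<inter> J. eta k)"

definition blade :: "4 set \<Rightarrow> mv" where
  "blade I = (\<chi> K. if K = I then 1 else 0)"

definition cmul :: "mv \<Rightarrow> mv \<Rightarrow> mv" where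
  "cmul A B = (\<chi> K. \<Sum>I\<in>UNIV. \<Sum>J\<in>UNIV.
      (if (I - J) \<union> (J - I) = K then blade_sign I J * (A $ I) * (B $ J) else 0))"

text \<open>Generator theta^a (upper index) and reciprocal theta_a = eta_aa theta^a.\<close>
definition gen :: "4 \<Rightarrow> mv" where
  "gen a = blade {a}"

definition gen_low :: "4 \<Rightarrow> mv" where
  "gen_low a = eta a *\<^sub>R gen a"

definition wedge2 :: "mv \<Rightarrow> mv \<Rightarrow> mv" where
  "wedge2 u v = (1/2) *\<^sub>R (cmul u v - cmul v u)"

definition rev_mv :: "mv \<Rightarrow> mv" where
  "rev_mv A = (\<chi> K. (-1) ^ (card K * (card K - 1) div 2) * A $ K)"

definition scal :: "mv \<Rightarrow> real" where
  "scal A = A $ {}"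

definition sprod :: "mv \<Rightarrow> mv \<Rightarrow> real" where
  "sprod X Y = scal (cmul (rev_mv X) Y)"

definition even_mv :: "mv \<Rightarrow> bool" where
  "even_mv A \<longleftrightarrow> (\<forall>K. odd (card K) \<longrightarrow> A $ K = 0)"

text \<open>Reciprocal basis blade theta^I (with sprod (recip I) (blade J) = delta).\<close>
definition recip_blade :: "4 set \<Rightarrow> mv" where
  "recip_blade I = (1 / sprod (blade I) (blade I)) *\<^sub>R blade I"

definition mvderiv_even :: "(mv \<Rightarrow> real) \<Rightarrow> mv \<Rightarrow> mv" where
  "mvderiv_even f P =
     (\<Sum>K\<in>{K. even (card K)}. deriv (\<lambda>t. f (P + t *\<^sub>R blade K)) 0 *\<^sub>R recip_blade K)"

definition pd :: "4 \<Rightarrow> (real^4 \<Rightarrow> 'b::real_normed_vector) \<Rightarrow> real^4 \<Rightarrow> 'b" where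
  "pd \<mu> f x = frechet_derivative f (at x) (axis \<mu> 1)"

text \<open>h x $ a $ mu = h^a_mu (coframe theta^a = h^a_mu dx^mu);
  hinv h x $ mu $ a = h^mu_a (frame e_a = h^mu_a d_mu).\<close>
definition hinv :: "(real^4 \<Rightarrow> real^4^4) \<Rightarrow> real^4 \<Rightarrow> real^4^4" where
  "hinv h x = matrix_inv (h x)"

text \<open>Metric components g_{mu nu} = eta_ab h^a_mu h^b_nu (coframe orthonormal).\<close>
definition gmat :: "(real^4 \<Rightarrow> real^4^4) \<Rightarrow> real^4 \<Rightarrow> real^4^4" where
  "gmat h x = (\<chi> \<mu> \<nu>. \<Sum>a\<in>UNIV. eta a * h x $ a $ \<mu> * h x $ a $ \<nu>)"

text \<open>Volume density sqrt |det g| (= 'frak h^{-1}' in the paper's convention).\<close>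
definition vol :: "(real^4 \<Rightarrow> real^4^4) \<Rightarrow> real^4 \<Rightarrow> real" where
  "vol h x = sqrt \<bar>det (gmat h x)\<bar>"

text \<open>Structure coefficients: [e_a, e_b] = c_ab^c e_c.\<close>
definition cstr :: "(real^4 \<Rightarrow> real^4^4) \<Rightarrow> real^4 \<Rightarrow> 4 \<Rightarrow> 4 \<Rightarrow> 4 \<Rightarrow> real" where
  "cstr h x a b c = (\<Sum>\<nu>\<in>UNIV. \<Sum>\<mu>\<in>UNIV. h x $ c $ \<nu> *
      (hinv h x $ \<mu> $ a * pd \<mu> (\<lambda>y. hinv h y $ \<nu> $ b) x
       - hinv h x $ \<mu> $ b * pd \<mu> (\<lambda>y. hinv h y $ \<nu> $ a) x))"

text \<open>om x a b c = omega_a^{bc}, defined by nabla_{e_a} theta^b = - omega_a^{bc} theta_c.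
  conn_coef gives omega_ab^c with nabla_{e_a} e_b = omega_ab^c e_c,
  i.e. omega_ab^c = omega_a^{cd} eta_db.\<close>
definition conn_coef :: "(real^4 \<Rightarrow> 4 \<Rightarrow> 4 \<Rightarrow> 4 \<Rightarrow> real) \<Rightarrow> real^4 \<Rightarrow> 4 \<Rightarrow> 4 \<Rightarrow> 4 \<Rightarrow> real" where
  "conn_coef om x a b c = eta b * om x a c b"

definition torsion :: "(real^4 \<Rightarrow> real^4^4) \<Rightarrow> (real^4 \<Rightarrow> 4 \<Rightarrow> 4 \<Rightarrow> 4 \<Rightarrow> real)
    \<Rightarrow> real^4 \<Rightarrow> 4 \<Rightarrow> 4 \<Rightarrow> 4 \<Rightarrow> real" where
  "torsion h om x a b c = conn_coef om x a b c - conn_coef om x b a c - cstr h x a b c"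

definition torsion_cov :: "(real^4 \<Rightarrow> real^4^4) \<Rightarrow> (real^4 \<Rightarrow> 4 \<Rightarrow> 4 \<Rightarrow> 4 \<Rightarrow> real)
    \<Rightarrow> real^4 \<Rightarrow> mv" where
  "torsion_cov h om x = (\<Sum>a\<in>UNIV. (\<Sum>b\<in>UNIV. torsion h om x a b b) *\<^sub>R gen a)"

definition omega_mv :: "(real^4 \<Rightarrow> 4 \<Rightarrow> 4 \<Rightarrow> 4 \<Rightarrow> real) \<Rightarrow> real^4 \<Rightarrow> 4 \<Rightarrow> mv" where
  "omega_mv om x a = (1/2) *\<^sub>R (\<Sum>b\<in>UNIV. \<Sum>c\<in>UNIV. om x a b c *\<^sub>R wedge2 (gen_low b) (gen_low c))"

text \<open>nabla^(s)_{e_a} psi = d_{e_a} psi + 1/2 omega_{e_a} psi, where P is the value of psi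
  and Q mu the value of d_mu psi (so d_{e_a} psi = h^mu_a Q mu).\<close>
definition spin_cov :: "(real^4 \<Rightarrow> real^4^4) \<Rightarrow> (real^4 \<Rightarrow> 4 \<Rightarrow> 4 \<Rightarrow> 4 \<Rightarrow> real)
    \<Rightarrow> real^4 \<Rightarrow> mv \<Rightarrow> (4 \<Rightarrow> mv) \<Rightarrow> 4 \<Rightarrow> mv" where
  "spin_cov h om x P Q a =
     (\<Sum>\<mu>\<in>UNIV. hinv h x $ \<mu> $ a *\<^sub>R Q \<mu>) + (1/2) *\<^sub>R cmul (omega_mv om x a) P"

definition dirac_op :: "(real^4 \<Rightarrow> real^4^4) \<Rightarrow> (real^4 \<Rightarrow> 4 \<Rightarrow> 4 \<Rightarrow> 4 \<Rightarrow> real)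
    \<Rightarrow> real^4 \<Rightarrow> mv \<Rightarrow> (4 \<Rightarrow> mv) \<Rightarrow> mv \<Rightarrow> mv" where
  "dirac_op h om x P Q G = (\<Sum>a\<in>UNIV. cmul (cmul (gen a) (spin_cov h om x P Q a)) G)"

definition gamma021 :: mv where
  "gamma021 = cmul (cmul (gen 0) (gen 2)) (gen 1)"

definition gamma21 :: mv where
  "gamma21 = cmul (gen 2) (gen 1)"

definition lagr :: "(real^4 \<Rightarrow> real^4^4) \<Rightarrow> (real^4 \<Rightarrow> 4 \<Rightarrow> 4 \<Rightarrow> 4 \<Rightarrow> real) \<Rightarrow> real
    \<Rightarrow> real^4 \<Rightarrow> mv \<Rightarrow> (4 \<Rightarrow> mv) \<Rightarrow> real" where
  "lagr h om m x P Q = (sprod (dirac_op h om x P Q gamma021) P - m * sprod P P) * vol h x"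

definition euler_lagrange :: "(real^4 \<Rightarrow> real^4^4) \<Rightarrow> (real^4 \<Rightarrow> 4 \<Rightarrow> 4 \<Rightarrow> 4 \<Rightarrow> real) \<Rightarrow> real
    \<Rightarrow> (real^4 \<Rightarrow> mv) \<Rightarrow> real^4 \<Rightarrow> mv" where
  "euler_lagrange h om m \<psi> x =
     mvderiv_even (\<lambda>P. lagr h om m x P (\<lambda>\<nu>. pd \<nu> \<psi> x)) (\<psi> x)
     - (\<Sum>\<mu>\<in>UNIV. pd \<mu> (\<lambda>y. mvderiv_even
            (\<lambda>R. lagr h om m y (\<psi> y) ((\<lambda>\<nu>. pd \<nu> \<psi> y)(\<mu> := R))) (pd \<mu> \<psi> y)) x)"

end

(* The Lagrangian is quadratic in psi and affine in its derivatives, so both multivector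
   derivatives in the Euler-Lagrange expression are even parts of explicit multivectors, read off
   from the adjoint rules of the scalar product (reversion fixes the theta^a and negates
   omega_{e_a} and theta^0 theta^2 theta^1). Differentiating the momentum term produces the
   divergence d_mu(vol h^mu_a) = -vol c_ab^b of the densitised frame (Jacobi's formula for det h),
   and the contraction c_ab^b theta^a combines with the commutator of theta^a and omega_{e_a}
   into the torsion covector T. Hence the Euler-Lagrange expression is 2 vol times the
   Dirac-Hestenes expression with torsion, where vol = |det h| is nonzero; right multiplication
   by theta^0, whose square is 1, gives the second form. *)

theory Submission
  imports Defs
begin

lemma sum_mult_of_bool_eq_point:
  "(\<Sum>j\<in>UNIV. f j * of_bool (j = a)) = (f a :: 'b::semiring_1)" for a :: "'a::finite"
  by (simp add: if_distrib[of "(*) _"] cong: if_cong)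

lemma sum_scaleR_of_bool_eq_point:
  "(\<Sum>j\<in>UNIV. (f j * of_bool (j = i)) *\<^sub>R g j) = f i *\<^sub>R g i"
  for i :: "'i::finite" and g :: "'i \<Rightarrow> 'a::real_vector"
proof -
  have "(f j * of_bool (j = i)) *\<^sub>R g j = (if j = i then f i *\<^sub>R g i else 0)" for j
    by simp
  then show ?thesis
    by simp
qed

lemma sum_of_bool_contract:
  fixes f :: "'i::finite \<Rightarrow> 'i \<Rightarrow> real" and g :: "'i \<Rightarrow> 'a::real_vector"
  shows "(\<Sum>j\<in>UNIV. \<Sum>k\<in>UNIV. (f j k * of_bool (j = i)) *\<^sub>R g k) = (\<Sum>k\<in>UNIV. f i k *\<^sub>R g k)"
  by (subst sum.swap) (simp add: sum_mult_of_bool_eq_point flip: scaleR_sum_left)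

lemma sum_of_bool_contract_inner:
  fixes f :: "'i::finite \<Rightarrow> 'i \<Rightarrow> real" and g :: "'i \<Rightarrow> 'a::real_vector"
  shows "(\<Sum>j\<in>UNIV. \<Sum>k\<in>UNIV. (f j k * of_bool (k = i)) *\<^sub>R g j) = (\<Sum>j\<in>UNIV. f j i *\<^sub>R g j)"
  by (simp add: sum_mult_of_bool_eq_point flip: scaleR_sum_left)

lemma sum_swap_inner:
  "(\<Sum>i\<in>A. \<Sum>j\<in>B. \<Sum>k\<in>C. f i j k) = (\<Sum>i\<in>A. \<Sum>k\<in>C. \<Sum>j\<in>B. f i j k)"
  by (rule sum.cong[OF refl]) (rule sum.swap)

section \<open>Clifford product of basis blades\<close>

definition inversion_count :: "'a::linorder set \<Rightarrow> 'a set \<Rightarrow> nat" where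
  "inversion_count I J = card {(i, j). i \<in> I \<and> j \<in> J \<and> j < i}"

definition inversion_sign :: "'a::linorder set \<Rightarrow> 'a set \<Rightarrow> real" where
  "inversion_sign I J = (-1) ^ inversion_count I J"

definition eta_prod :: "4 set \<Rightarrow> real" where
  "eta_prod S = (\<Prod>k\<in>S. eta k)"

lemma blade_sign_eq: "blade_sign I J = inversion_sign I J * eta_prod (I \<inter> J)"
  by (simp add: blade_sign_def inversion_sign_def inversion_count_def eta_prod_def)

lemma prod_sym_diff:
  fixes f :: "'a \<Rightarrow> 'b::comm_monoid_mult"
  assumes "finite I" "finite J" and "\<And>x. f x * f x = 1"
  shows "prod f (sym_diff I J) = prod f I * prod f J"
proof -
  have "prod f I * prod f J = (prod f (I - J) * prod f (J - I)) * (prod f (I \<inter> J) * prod f (I \<inter> J))"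
    using prod.Int_Diff[of I f J] prod.Int_Diff[of J f I] assms(1,2)
    by (simp add: Int_commute ac_simps)
  also have "prod f (I \<inter> J) * prod f (I \<inter> J) = 1"
    by (simp add: assms(3) flip: prod.distrib)
  also have "prod f (I - J) * prod f (J - I) = prod f (sym_diff I J)"
    using assms(1,2) by (intro prod.union_disjoint[symmetric]) auto
  finally show ?thesis by simp
qed

lemma inversion_count_eq_sum_left:
  "inversion_count A M = (\<Sum>i\<in>A. card {j\<in>M. j < i})" for A M :: "'a::{finite,linorder} set"
proof -
  have "{(i, j). i \<in> A \<and> j \<in> M \<and> j < i} = Sigma A (\<lambda>i. {j\<in>M. j < i})" by auto
  then show ?thesis unfolding inversion_count_def by (simp add: card_SigmaI)
qed

lemma inversion_count_eq_sum_right: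
  "inversion_count A M = (\<Sum>j\<in>M. card {i\<in>A. j < i})" for A M :: "'a::{finite,linorder} set"
proof -
  have "{(i, j). i \<in> A \<and> j \<in> M \<and> j < i} = (\<lambda>(j, i). (i, j)) ` Sigma M (\<lambda>j. {i\<in>A. j < i})"
    by auto
  moreover have "inj_on (\<lambda>(j, i). (i, j)) (Sigma M (\<lambda>j. {i\<in>A. j < i}))"
    by (auto simp: inj_on_def)
  ultimately show ?thesis unfolding inversion_count_def by (simp add: card_image card_SigmaI)
qed

lemma inversion_sign_sym_diff_left:
  "inversion_sign (sym_diff I J) M = inversion_sign I M * inversion_sign J M"
  for I J M :: "'a::{finite,linorder} set"
proof -
  have "inversion_sign A M = (\<Prod>i\<in>A. (-1::real) ^ card {j\<in>M. j < i})" for A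
    by (simp add: inversion_sign_def inversion_count_eq_sum_left power_sum)
  then show ?thesis by (simp add: prod_sym_diff flip: power_add)
qed

lemma inversion_sign_sym_diff_right:
  "inversion_sign M (sym_diff I J) = inversion_sign M I * inversion_sign M J"
  for I J M :: "'a::{finite,linorder} set"
proof -
  have "inversion_sign M A = (\<Prod>j\<in>A. (-1::real) ^ card {i\<in>M. j < i})" for A
    by (simp add: inversion_sign_def inversion_count_eq_sum_right power_sum)
  then show ?thesis by (simp add: prod_sym_diff flip: power_add)
qed

lemma inversion_sign_square: "inversion_sign I J * inversion_sign I J = 1"
  by (simp add: inversion_sign_def flip: power_add)

lemma eta_square: "eta k * eta k = 1"
  by (simp add: eta_def)

lemma eta_prod_sym_diff: "eta_prod (sym_diff I J) = eta_prod I * eta_prod J"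
  unfolding eta_prod_def by (rule prod_sym_diff) (simp_all add: eta_square)

(* Associativity of the Clifford product reduces to this identity. *)
lemma blade_sign_cocycle:
  "blade_sign I J * blade_sign (sym_diff I J) K = blade_sign J K * blade_sign I (sym_diff J K)"
proof -
  have "sym_diff I J \<inter> K = sym_diff (I \<inter> K) (J \<inter> K)"
    and "I \<inter> sym_diff J K = sym_diff (I \<inter> J) (I \<inter> K)"
    by auto
  then show ?thesis
    unfolding blade_sign_eq inversion_sign_sym_diff_left inversion_sign_sym_diff_right
    by (simp only: eta_prod_sym_diff) (simp add: Int_commute ac_simps)
qed

section \<open>The multivector algebra\<close>

lemma blade_component: "blade I $ K = of_bool (K = I)"
  by (simp add: blade_def)

lemma cmul_component:
  "cmul A B $ K = (\<Sum>I\<in>UNIV. \<Sum>J\<in>UNIV. of_bool (sym_diff I J = K) * blade_sign I J * A $ I * B $ J)"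
  unfolding cmul_def vec_lambda_beta by (intro sum.cong refl) simp

lemma mv_expand: "A = (\<Sum>I\<in>UNIV. A $ I *\<^sub>R blade I)"
  by (simp add: vec_eq_iff sum_component blade_component)

lemma linear_eq_on_blades:
  assumes "linear f" "linear g" "\<And>I. f (blade I) = g (blade I)"
  shows "f A = g A"
  by (subst (1 2) mv_expand) (simp add: assms linear_sum linear_scale)

lemma cmul_blade: "cmul (blade I) (blade J) = blade_sign I J *\<^sub>R blade (sym_diff I J)"
  by (simp only: vec_eq_iff cmul_component blade_component sum_mult_of_bool_eq_point)
    (simp add: blade_component)

lemma bilinear_cmul: "bilinear cmul"
  unfolding bilinear_def
  by (auto intro!: linearI simp: vec_eq_iff cmul_component algebra_simps sum.distrib sum_distrib_left)

lemmas linear_cmul_right = bilinear_cmul[unfolded bilinear_def, THEN conjunct1, rule_format]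
lemmas linear_cmul_left = bilinear_cmul[unfolded bilinear_def, THEN conjunct2, rule_format]

lemmas cmul_add_left = linear_add[OF linear_cmul_left]
lemmas cmul_add_right = linear_add[OF linear_cmul_right]
lemmas cmul_diff_left = linear_diff[OF linear_cmul_left]
lemmas cmul_diff_right = linear_diff[OF linear_cmul_right]
lemmas cmul_minus_left = linear_neg[OF linear_cmul_left]
lemmas cmul_minus_right = linear_neg[OF linear_cmul_right]
lemmas cmul_scaleR_left = linear_scale[OF linear_cmul_left]
lemmas cmul_scaleR_right = linear_scale[OF linear_cmul_right]
lemmas cmul_sum_left = linear_sum[OF linear_cmul_left]
lemmas cmul_sum_right = linear_sum[OF linear_cmul_right]
lemmas cmul_zero_left [simp] = linear_0[OF linear_cmul_left]

lemmas cmul_linear_simps = cmul_add_left cmul_add_right cmul_diff_left cmul_diff_right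
  cmul_minus_left cmul_minus_right cmul_scaleR_left cmul_scaleR_right cmul_sum_left cmul_sum_right

lemma sym_diff_assoc: "sym_diff (sym_diff I J) K = sym_diff I (sym_diff J K)"
  by auto

lemma cmul_assoc_blades:
  "cmul (cmul (blade I) (blade J)) (blade K) = cmul (blade I) (cmul (blade J) (blade K))"
  unfolding cmul_blade cmul_scaleR_left cmul_scaleR_right scaleR_scaleR blade_sign_cocycle sym_diff_assoc ..

lemma cmul_assoc: "cmul (cmul A B) C = cmul A (cmul B C)"
proof -
  have blade_blade: "cmul (cmul (blade I) (blade J)) C = cmul (blade I) (cmul (blade J) C)" for I J
    by (rule linear_eq_on_blades[of "\<lambda>C. cmul (cmul (blade I) (blade J)) C" "\<lambda>C. cmul (blade I) (cmul (blade J) C)"];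
        (intro linearI)?; simp add: cmul_linear_simps cmul_assoc_blades)
  have blade: "cmul (cmul (blade I) B) C = cmul (blade I) (cmul B C)" for I
    by (rule linear_eq_on_blades[of "\<lambda>B. cmul (cmul (blade I) B) C" "\<lambda>B. cmul (blade I) (cmul B C)"];
        (intro linearI)?; simp add: cmul_linear_simps blade_blade)
  show ?thesis
    by (rule linear_eq_on_blades[of "\<lambda>A. cmul (cmul A B) C" "\<lambda>A. cmul A (cmul B C)"];
        (intro linearI)?; simp add: cmul_linear_simps blade)
qed

section \<open>Reversion and the scalar product\<close>

lemma inversion_count_self: "2 * inversion_count K K = card K * (card K - 1)"
  for K :: "'a::{finite,linorder} set"
proof -
  let ?A = "{(i, j). i \<in> K \<and> j \<in> K \<and> j < i}"
  let ?B = "{(i, j). i \<in> K \<and> j \<in> K \<and> i < j}"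
  have "?B = prod.swap ` ?A" and "inj_on prod.swap ?A"
    by auto
  then have "card ?B = card ?A"
    by (simp add: card_image)
  moreover have "card ?A + card ?B = card (?A \<union> ?B)"
    by (rule card_Un_disjoint[symmetric]) auto
  moreover have "?A \<union> ?B = K \<times> K - (\<lambda>i. (i, i)) ` K"
    by (auto simp: neq_iff)
  moreover have "card (K \<times> K - (\<lambda>i. (i, i)) ` K) = card K * card K - card K"
    by (subst card_Diff_subset) (auto simp: card_image inj_on_def card_cartesian_product)
  ultimately show ?thesis
    unfolding inversion_count_def by (simp add: diff_mult_distrib2)
qed

lemma rev_mv_component: "rev_mv A $ K = inversion_sign K K * A $ K"
proof -
  have "card K * (card K - 1) div 2 = inversion_count K K"
    using inversion_count_self[of K] by simp
  then show ?thesis by (simp add: rev_mv_def inversion_sign_def)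
qed

lemma rev_mv_blade: "rev_mv (blade I) = inversion_sign I I *\<^sub>R blade I"
  by (simp add: vec_eq_iff rev_mv_component blade_component)

lemma linear_rev_mv: "linear rev_mv"
  by (rule linearI) (simp_all add: vec_eq_iff rev_mv_component algebra_simps)

lemmas rev_mv_add = linear_add[OF linear_rev_mv]
lemmas rev_mv_diff = linear_diff[OF linear_rev_mv]
lemmas rev_mv_scaleR = linear_scale[OF linear_rev_mv]
lemmas rev_mv_sum = linear_sum[OF linear_rev_mv]

lemma rev_mv_cmul_blades: "rev_mv (cmul (blade I) (blade J)) = cmul (rev_mv (blade J)) (rev_mv (blade I))"
proof -
  have "blade_sign I J * inversion_sign (sym_diff I J) (sym_diff I J)
      = (inversion_sign I J * inversion_sign I J)
        * (inversion_sign I I * inversion_sign J J * blade_sign J I)"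
    by (simp add: inversion_sign_sym_diff_left inversion_sign_sym_diff_right blade_sign_eq
        Int_commute ac_simps)
  also have "\<dots> = inversion_sign I I * inversion_sign J J * blade_sign J I"
    by (simp add: inversion_sign_square)
  moreover have "sym_diff J I = sym_diff I J"
    by blast
  ultimately show ?thesis
    by (simp add: cmul_blade rev_mv_scaleR rev_mv_blade cmul_scaleR_left cmul_scaleR_right)
qed

lemma rev_mv_cmul: "rev_mv (cmul A B) = cmul (rev_mv B) (rev_mv A)"
proof -
  have blade: "rev_mv (cmul (blade I) B) = cmul (rev_mv B) (rev_mv (blade I))" for I
    by (rule linear_eq_on_blades[of "\<lambda>B. rev_mv (cmul (blade I) B)" "\<lambda>B. cmul (rev_mv B) (rev_mv (blade I))"];
        (intro linearI)?; simp add: cmul_linear_simps rev_mv_add rev_mv_scaleR rev_mv_cmul_blades)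
  show ?thesis
    by (rule linear_eq_on_blades[of "\<lambda>A. rev_mv (cmul A B)" "\<lambda>A. cmul (rev_mv B) (rev_mv A)"];
        (intro linearI)?; simp add: cmul_linear_simps rev_mv_add rev_mv_scaleR blade)
qed

definition blade_norm :: "4 set \<Rightarrow> real" where
  "blade_norm K = blade_sign K K * inversion_sign K K"

lemma blade_norm_nonzero: "blade_norm K \<noteq> 0"
  by (simp add: blade_norm_def blade_sign_eq inversion_sign_def eta_prod_def eta_def)

lemma scal_cmul: "scal (cmul A B) = (\<Sum>I\<in>UNIV. blade_sign I I * A $ I * B $ I)"
proof -
  have "of_bool (sym_diff I J = {}) * blade_sign I J * A $ I * B $ J
      = blade_sign I J * A $ I * B $ J * of_bool (J = I)" for I J :: "4 set"
    by (cases "J = I") auto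
  then show ?thesis
    by (simp only: scal_def cmul_component sum_mult_of_bool_eq_point)
qed

lemma sprod_eq: "sprod X Y = (\<Sum>I\<in>UNIV. blade_norm I * X $ I * Y $ I)"
  by (simp add: sprod_def scal_cmul rev_mv_component blade_norm_def ac_simps)

lemma sprod_commute: "sprod X Y = sprod Y X"
  by (simp add: sprod_eq ac_simps)

lemma bilinear_sprod: "bilinear sprod"
  unfolding bilinear_def
  by (auto intro!: linearI simp: sprod_eq algebra_simps sum.distrib sum_distrib_left)

lemmas linear_sprod_right = bilinear_sprod[unfolded bilinear_def, THEN conjunct1, rule_format]
lemmas linear_sprod_left = bilinear_sprod[unfolded bilinear_def, THEN conjunct2, rule_format]

lemmas sprod_linear_simps =
  linear_add[OF linear_sprod_left] linear_add[OF linear_sprod_right]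
  linear_diff[OF linear_sprod_left] linear_diff[OF linear_sprod_right]
  linear_neg[OF linear_sprod_left] linear_neg[OF linear_sprod_right]
  linear_scale[OF linear_sprod_left] linear_scale[OF linear_sprod_right]
  linear_sum[OF linear_sprod_left] linear_sum[OF linear_sprod_right]

lemma sprod_blade: "sprod G (blade K) = G $ K * blade_norm K"
  by (simp add: sprod_eq blade_component mult.commute sum_mult_of_bool_eq_point)

lemma sprod_cmul_left_adjoint: "sprod (cmul A B) C = sprod B (cmul (rev_mv A) C)"
  by (simp add: sprod_def rev_mv_cmul cmul_assoc)

lemma scal_cmul_commute: "scal (cmul X Y) = scal (cmul Y X)"
  by (simp add: scal_cmul ac_simps)

lemma sprod_cmul_right_adjoint: "sprod (cmul B A) C = sprod B (cmul C (rev_mv A))"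
  by (simp add: sprod_def rev_mv_cmul cmul_assoc scal_cmul_commute[of "rev_mv A"])

definition odd_mv :: "mv \<Rightarrow> bool" where
  "odd_mv A \<longleftrightarrow> (\<forall>K. even (card K) \<longrightarrow> A $ K = 0)"

lemma even_card_sym_diff:
  assumes "finite I" "finite J"
  shows "even (card (sym_diff I J)) \<longleftrightarrow> (even (card I) \<longleftrightarrow> even (card J))"
proof -
  have "card (sym_diff I J) = card (I - J) + card (J - I)"
    using assms by (intro card_Un_disjoint) auto
  moreover have "card I = card (I \<inter> J) + card (I - J)" "card J = card (J \<inter> I) + card (J - I)"
    using assms by (simp_all add: card_Int_Diff)
  ultimately show ?thesis
    by (auto simp: Int_commute)
qed

lemma cmul_component_eq_0:
  assumes "\<And>I J. sym_diff I J = K \<Longrightarrow> A $ I = 0 \<or> B $ J = 0"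
  shows "cmul A B $ K = 0"
  unfolding cmul_component using assms by (force intro!: sum.neutral)

lemma even_mv_cmul: "even_mv A \<Longrightarrow> even_mv B \<Longrightarrow> even_mv (cmul A B)"
  and even_mv_cmul_odd: "odd_mv A \<Longrightarrow> odd_mv B \<Longrightarrow> even_mv (cmul A B)"
  and odd_mv_cmul_even_odd: "even_mv A \<Longrightarrow> odd_mv B \<Longrightarrow> odd_mv (cmul A B)"
  and odd_mv_cmul_odd_even: "odd_mv A \<Longrightarrow> even_mv B \<Longrightarrow> odd_mv (cmul A B)"
  unfolding even_mv_def odd_mv_def
  by (auto intro!: cmul_component_eq_0 simp: even_card_sym_diff)

lemma even_mv_add: "even_mv A \<Longrightarrow> even_mv B \<Longrightarrow> even_mv (A + B)"
  and even_mv_diff: "even_mv A \<Longrightarrow> even_mv B \<Longrightarrow> even_mv (A - B)"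
  and even_mv_scaleR: "even_mv A \<Longrightarrow> even_mv (c *\<^sub>R A)"
  and even_mv_sum: "(\<And>i. i \<in> S \<Longrightarrow> even_mv (f i)) \<Longrightarrow> even_mv (sum f S)"
  unfolding even_mv_def by (auto simp: sum_component intro!: sum.neutral)

lemma odd_mv_scaleR: "odd_mv A \<Longrightarrow> odd_mv (c *\<^sub>R A)"
  and odd_mv_sum: "(\<And>i. i \<in> S \<Longrightarrow> odd_mv (f i)) \<Longrightarrow> odd_mv (sum f S)"
  unfolding odd_mv_def by (auto simp: sum_component intro!: sum.neutral)

lemma odd_mv_gen: "odd_mv (gen a)"
  by (auto simp: odd_mv_def gen_def blade_component)

lemma odd_mv_gen_low: "odd_mv (gen_low a)"
  unfolding gen_low_def by (intro odd_mv_scaleR odd_mv_gen)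

section \<open>The generators\<close>

abbreviation one_mv :: mv where
  "one_mv \<equiv> blade {}"

lemma cmul_one_mv_left [simp]: "cmul one_mv X = X"
  by (rule linear_eq_on_blades[of "cmul one_mv" id, simplified])
    (simp_all add: linear_cmul_right linear_id cmul_blade blade_sign_def)

lemma cmul_one_mv_right [simp]: "cmul X one_mv = X"
  by (rule linear_eq_on_blades[of "\<lambda>X. cmul X one_mv" id, simplified])
    (simp_all add: linear_cmul_left linear_id cmul_blade blade_sign_def)

lemma inversion_count_singleton: "inversion_count {a} {b} = of_bool (b < a)"
proof -
  have "{(i, j). i \<in> {a} \<and> j \<in> {b} \<and> j < i} = (if b < a then {(a, b)} else {})"
    by auto
  then show ?thesis
    by (simp add: inversion_count_def)
qed

lemma cmul_gen_gen:
  "cmul (gen a) (gen b) = (if a = b then eta a *\<^sub>R one_mv else blade_sign {a} {b} *\<^sub>R blade {a, b})"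
proof -
  have "sym_diff {a} {b} = (if a = b then {} else {a, b})"
    by auto
  then show ?thesis
    by (simp add: gen_def cmul_blade blade_sign_eq inversion_sign_def inversion_count_singleton eta_prod_def)
qed

lemma gen_anticommute: "cmul (gen a) (gen b) + cmul (gen b) (gen a) = (2 * of_bool (a = b) * eta a) *\<^sub>R one_mv"
proof (cases "a = b")
  case False
  then have "blade_sign {b} {a} = - blade_sign {a} {b}"
    by (auto simp: blade_sign_eq inversion_sign_def inversion_count_singleton eta_prod_def)
  then show ?thesis
    using False by (simp add: cmul_gen_gen insert_commute)
qed (simp add: cmul_gen_gen flip: scaleR_2)

lemma gen_gen_low_anticommute:
  "cmul (gen a) (gen_low b) + cmul (gen_low b) (gen a) = (2 * of_bool (b = a)) *\<^sub>R one_mv"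
  using gen_anticommute[of a b]
  by (auto simp: gen_low_def cmul_scaleR_left cmul_scaleR_right eta_square
      simp flip: scaleR_add_right)

lemma commutator_cmul:
  "cmul X (cmul Y Z) - cmul (cmul Y Z) X = cmul (cmul X Y + cmul Y X) Z - cmul Y (cmul X Z + cmul Z X)"
  by (simp add: cmul_linear_simps cmul_assoc)

lemma half_difference_of_opposites:
  fixes u v :: "'a::real_vector"
  shows "(1/2) *\<^sub>R (((2 * p) *\<^sub>R u - (2 * q) *\<^sub>R v) - ((2 * q) *\<^sub>R v - (2 * p) *\<^sub>R u))
    = 2 *\<^sub>R (p *\<^sub>R u - q *\<^sub>R v)"
  by (simp add: algebra_simps flip: scaleR_2)

lemma commutator_gen_wedge2:
  "cmul (gen a) (wedge2 (gen_low b) (gen_low c)) - cmul (wedge2 (gen_low b) (gen_low c)) (gen a)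
   = 2 *\<^sub>R (of_bool (b = a) *\<^sub>R gen_low c - of_bool (c = a) *\<^sub>R gen_low b)"
proof -
  have product: "cmul (gen a) (cmul (gen_low b) (gen_low c)) - cmul (cmul (gen_low b) (gen_low c)) (gen a)
      = (2 * of_bool (b = a)) *\<^sub>R gen_low c - (2 * of_bool (c = a)) *\<^sub>R gen_low b" for b c
    by (simp only: commutator_cmul gen_gen_low_anticommute cmul_scaleR_left cmul_scaleR_right
        cmul_one_mv_left cmul_one_mv_right)
  have "cmul (gen a) (wedge2 (gen_low b) (gen_low c)) - cmul (wedge2 (gen_low b) (gen_low c)) (gen a)
    = (1/2) *\<^sub>R ((cmul (gen a) (cmul (gen_low b) (gen_low c)) - cmul (cmul (gen_low b) (gen_low c)) (gen a))
        - (cmul (gen a) (cmul (gen_low c) (gen_low b)) - cmul (cmul (gen_low c) (gen_low b)) (gen a)))"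
    by (simp only: wedge2_def cmul_linear_simps scaleR_diff_right) (simp only: algebra_simps)
  also have "\<dots> = 2 *\<^sub>R (of_bool (b = a) *\<^sub>R gen_low c - of_bool (c = a) *\<^sub>R gen_low b)"
    unfolding product by (rule half_difference_of_opposites)
  finally show ?thesis .
qed

lemma rev_mv_gen: "rev_mv (gen a) = gen a"
  by (simp add: gen_def rev_mv_blade inversion_sign_def inversion_count_singleton)

lemma rev_mv_gen_low: "rev_mv (gen_low a) = gen_low a"
  by (simp add: gen_low_def rev_mv_scaleR rev_mv_gen)

lemma cmul_gen_swap: "a \<noteq> b \<Longrightarrow> cmul (gen a) (gen b) = - cmul (gen b) (gen a)"
  using gen_anticommute[of a b] by (simp add: eq_neg_iff_add_eq_0)

lemma rev_mv_cmul_distinct_gens: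
  assumes "a \<noteq> b" "a \<noteq> c" "b \<noteq> c"
  shows "rev_mv (cmul (cmul (gen a) (gen b)) (gen c)) = - cmul (cmul (gen a) (gen b)) (gen c)"
proof -
  have "rev_mv (cmul (cmul (gen a) (gen b)) (gen c)) = cmul (cmul (gen c) (gen b)) (gen a)"
    by (simp add: rev_mv_cmul rev_mv_gen cmul_assoc)
  also have "\<dots> = - cmul (gen b) (cmul (gen c) (gen a))"
    using assms by (simp add: cmul_gen_swap[of c b] cmul_linear_simps cmul_assoc)
  also have "\<dots> = cmul (cmul (gen b) (gen a)) (gen c)"
    using assms by (simp add: cmul_gen_swap[of c a] cmul_linear_simps cmul_assoc)
  also have "\<dots> = - cmul (cmul (gen a) (gen b)) (gen c)"
    using assms by (simp add: cmul_gen_swap[of b a] cmul_linear_simps)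
  finally show ?thesis .
qed

lemma rev_mv_gamma021: "rev_mv gamma021 = - gamma021"
  unfolding gamma021_def by (rule rev_mv_cmul_distinct_gens) simp_all

lemma cmul_gen_0_gen_0: "cmul (gen 0) (gen 0) = one_mv"
  by (simp add: cmul_gen_gen eta_def)

lemma cmul_gamma021_gen_0: "cmul gamma021 (gen 0) = gamma21"
proof -
  have "cmul gamma021 (gen 0) = - cmul (cmul (gen 0) (cmul (gen 2) (gen 0))) (gen 1)"
    by (simp add: gamma021_def cmul_assoc cmul_gen_swap[of 1 0] cmul_linear_simps)
  also have "\<dots> = gamma21"
    by (simp add: gamma21_def cmul_gen_swap[of 2 0] cmul_linear_simps cmul_gen_0_gen_0 flip: cmul_assoc)
  finally show ?thesis .
qed

section \<open>Spin connection and torsion\<close>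

lemma commutator_gen_omega_mv:
  assumes "\<And>b c. om x a b c = - om x a c b"
  shows "cmul (gen a) (omega_mv om x a) - cmul (omega_mv om x a) (gen a)
    = 2 *\<^sub>R (\<Sum>c\<in>UNIV. om x a a c *\<^sub>R gen_low c)"
proof -
  have "cmul (gen a) (omega_mv om x a) - cmul (omega_mv om x a) (gen a)
      = (1/2) *\<^sub>R (\<Sum>b\<in>UNIV. \<Sum>c\<in>UNIV. om x a b c *\<^sub>R
          (cmul (gen a) (wedge2 (gen_low b) (gen_low c)) - cmul (wedge2 (gen_low b) (gen_low c)) (gen a)))"
    by (simp only: omega_mv_def cmul_linear_simps scaleR_diff_right sum_subtractf)
  also have "\<dots> = (\<Sum>c\<in>UNIV. om x a a c *\<^sub>R gen_low c) - (\<Sum>b\<in>UNIV. om x a b a *\<^sub>R gen_low b)"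
    by (simp add: commutator_gen_wedge2 scaleR_diff_right sum_subtractf scaleR_sum_right
        sum_of_bool_contract sum_of_bool_contract_inner)
  also have "\<dots> = 2 *\<^sub>R (\<Sum>c\<in>UNIV. om x a a c *\<^sub>R gen_low c)"
    by (simp add: assms[of _ a] sum_negf flip: scaleR_2)
  finally show ?thesis .
qed

lemma rev_mv_wedge2: "rev_mv u = u \<Longrightarrow> rev_mv v = v \<Longrightarrow> rev_mv (wedge2 u v) = - wedge2 u v"
  by (simp add: wedge2_def rev_mv_scaleR rev_mv_diff rev_mv_cmul flip: scaleR_minus_right)

lemma rev_mv_omega_mv: "rev_mv (omega_mv om x a) = - omega_mv om x a"
  by (simp add: omega_mv_def rev_mv_scaleR rev_mv_sum rev_mv_wedge2 rev_mv_gen_low sum_negf)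

definition connection_mv :: "(real^4 \<Rightarrow> 4 \<Rightarrow> 4 \<Rightarrow> 4 \<Rightarrow> real) \<Rightarrow> real^4 \<Rightarrow> mv" where
  "connection_mv om x = (1/2) *\<^sub>R (\<Sum>a\<in>UNIV. cmul (gen a) (omega_mv om x a))"

lemma connection_mv_add_rev_mv:
  assumes "\<And>a b c. om x a b c = - om x a c b"
  shows "connection_mv om x + rev_mv (connection_mv om x)
    = (\<Sum>a\<in>UNIV. (\<Sum>b\<in>UNIV. eta a * om x b b a) *\<^sub>R gen a)"
proof -
  have commutator: "cmul (gen a) (omega_mv om x a) - cmul (omega_mv om x a) (gen a)
      = 2 *\<^sub>R (\<Sum>c\<in>UNIV. om x a a c *\<^sub>R gen_low c)" for a
    by (rule commutator_gen_omega_mv) (rule assms)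
  have "connection_mv om x + rev_mv (connection_mv om x)
      = (1/2) *\<^sub>R (\<Sum>a\<in>UNIV. cmul (gen a) (omega_mv om x a) - cmul (omega_mv om x a) (gen a))"
    by (simp add: connection_mv_def rev_mv_scaleR rev_mv_sum rev_mv_cmul rev_mv_omega_mv rev_mv_gen
        cmul_linear_simps sum_subtractf sum_negf scaleR_diff_right)
  also have "\<dots> = (\<Sum>b\<in>UNIV. \<Sum>a\<in>UNIV. (eta a * om x b b a) *\<^sub>R gen a)"
    by (simp add: commutator scaleR_sum_right gen_low_def mult.commute)
  also have "\<dots> = (\<Sum>a\<in>UNIV. (\<Sum>b\<in>UNIV. eta a * om x b b a) *\<^sub>R gen a)"
    by (subst sum.swap) (simp add: scaleR_sum_left)
  finally show ?thesis .
qed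

lemma torsion_cov_eq:
  assumes "\<And>a b c. om x a b c = - om x a c b"
  shows "torsion_cov h om x = - (\<Sum>a\<in>UNIV. (\<Sum>b\<in>UNIV. cstr h x a b b) *\<^sub>R gen a)
    - (connection_mv om x + rev_mv (connection_mv om x))"
proof -
  have "torsion h om x a b b = - (eta a * om x b b a) - cstr h x a b b" for a b
    using assms[of a b b] by (simp add: torsion_def conn_coef_def)
  then show ?thesis
    unfolding connection_mv_add_rev_mv[where om = om and x = x, OF assms] torsion_cov_def
    by (simp add: sum_subtractf sum_negf scaleR_diff_left scaleR_sum_left)
qed

lemma even_mv_omega_mv: "even_mv (omega_mv om x a)"
  unfolding omega_mv_def wedge2_def
  by (intro even_mv_scaleR even_mv_sum even_mv_diff even_mv_cmul_odd odd_mv_gen_low)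

lemma odd_mv_torsion_cov: "odd_mv (torsion_cov h om x)"
  unfolding torsion_cov_def by (intro odd_mv_sum odd_mv_scaleR odd_mv_gen)

lemma odd_mv_gamma021: "odd_mv gamma021"
  unfolding gamma021_def by (intro odd_mv_cmul_even_odd even_mv_cmul_odd odd_mv_gen)

section \<open>Multivector derivatives\<close>

definition even_part :: "mv \<Rightarrow> mv" where
  "even_part G = (\<Sum>K\<in>{K. even (card K)}. G $ K *\<^sub>R blade K)"

lemma linear_even_part: "linear even_part"
  by (rule linearI) (simp_all add: even_part_def scaleR_add_left sum.distrib scaleR_sum_right)

lemma bounded_linear_even_part: "bounded_linear even_part"
  using linear_even_part linear_conv_bounded_linear by blast

lemma even_part_even_mv: "even_mv G \<Longrightarrow> even_part G = G"
  unfolding even_part_def even_mv_def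
  by (subst (2) mv_expand) (auto intro!: sum.mono_neutral_left)

lemma mvderiv_even_eqI:
  assumes "\<And>K. ((\<lambda>t. f (P + t *\<^sub>R blade K)) has_real_derivative sprod G (blade K)) (at 0)"
  shows "mvderiv_even f P = even_part G"
  unfolding mvderiv_even_def even_part_def
proof (intro sum.cong refl)
  fix K
  have "deriv (\<lambda>t. f (P + t *\<^sub>R blade K)) 0 = G $ K * blade_norm K"
    using DERIV_imp_deriv[OF assms] by (simp add: sprod_blade)
  then show "deriv (\<lambda>t. f (P + t *\<^sub>R blade K)) 0 *\<^sub>R recip_blade K = G $ K *\<^sub>R blade K"
    using blade_norm_nonzero[of K] by (simp add: recip_blade_def sprod_blade blade_component)
qed

section \<open>Matrices and determinants\<close>

lemma matrix_inv_right: "invertible A \<Longrightarrow> A ** matrix_inv A = mat 1"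
  and matrix_inv_left: "invertible A \<Longrightarrow> matrix_inv A ** A = mat 1"
  for A :: "'a::semiring_1^'n^'n"
  unfolding invertible_def matrix_inv_def by (metis (mono_tags, lifting) someI_ex)+

lemma det_replace_row:
  fixes A :: "real^'n^'n"
  assumes "invertible A"
  shows "det (\<chi> j. if j = i then r else A $ j) = det A * (r v* matrix_inv A) $ i"
proof -
  let ?x = "r v* matrix_inv A"
  have "(\<Sum>k\<in>UNIV. ?x $ k *s row k A) = ?x v* A"
    by (simp add: vec_eq_iff row_def vector_matrix_mult_def sum_component mult.commute)
  also have "\<dots> = r"
    by (simp add: vector_matrix_mul_assoc matrix_inv_left[OF assms])
  finally have combination: "(\<Sum>k\<in>UNIV. ?x $ k *s row k A) = r" .
  have rows: "row j A = A $ j" for j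
    by (simp add: row_def vec_eq_iff)
  have "det (\<chi> j. if j = i then r else A $ j)
      = det (\<chi> j. if j = i then \<Sum>k\<in>UNIV. ?x $ k *s row k A else row j A)"
    by (simp only: combination) (simp only: rows)
  then show ?thesis
    by (simp add: cramer_lemma_transpose mult.commute)
qed

lemma matrix_inv_component:
  fixes A :: "real^'n^'n"
  assumes "invertible A"
  shows "matrix_inv A $ \<nu> $ i = det (\<chi> j. if j = i then axis \<nu> 1 else A $ j) / det A"
  using det_replace_row[OF assms, of i "axis \<nu> 1"] assms
  by (simp add: invertible_det_nz vector_matrix_mult_def axis_def if_distrib[of "\<lambda>r. r * _"] cong: if_cong)

lemma has_derivative_matrix_component:
  "(M has_derivative M') F \<Longrightarrow> ((\<lambda>y. M y $ i $ j) has_derivative (\<lambda>v. M' v $ i $ j)) F"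
  by (intro bounded_linear.has_derivative[OF bounded_linear_vec_nth])

lemma has_derivative_det:
  fixes M :: "'a::real_normed_vector \<Rightarrow> real^'n^'n"
  assumes "\<And>i j. ((\<lambda>y. M y $ i $ j) has_derivative D i j) (at x)"
  shows "((\<lambda>y. det (M y)) has_derivative
      (\<lambda>v. \<Sum>i\<in>UNIV. det (\<chi> j. if j = i then (\<chi> k. D i k v) else M x $ j))) (at x)"
proof -
  have row: "(\<Prod>j\<in>UNIV. (\<chi> j. if j = i then (\<chi> k. D i k v) else M x $ j) $ j $ p j)
      = D i (p i) v * (\<Prod>j\<in>UNIV - {i}. M x $ j $ p j)" for i p v
  proof -
    have "(\<Prod>j\<in>UNIV - {i}. (\<chi> j. if j = i then (\<chi> k. D i k v) else M x $ j) $ j $ p j)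
        = (\<Prod>j\<in>UNIV - {i}. M x $ j $ p j)"
      by (rule prod.cong) auto
    then show ?thesis
      by (simp add: prod.remove[of UNIV i])
  qed
  show ?thesis
    unfolding det_def row
    by (rule has_derivative_eq_rhs, (rule derivative_intros assms)+)
      (simp add: fun_eq_iff sum_distrib_left sum.swap[of _ UNIV])
qed

lemma has_derivative_det_invertible:
  fixes M :: "'a::real_normed_vector \<Rightarrow> real^'n^'n"
  assumes "(M has_derivative M') (at x)" "invertible (M x)"
  shows "((\<lambda>y. det (M y)) has_derivative
      (\<lambda>v. det (M x) * (\<Sum>i\<in>UNIV. \<Sum>j\<in>UNIV. M' v $ i $ j * matrix_inv (M x) $ j $ i))) (at x)"
proof -
  have "((\<lambda>y. M y $ i $ j) has_derivative (\<lambda>v. M' v $ i $ j)) (at x)" for i j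
    by (rule has_derivative_matrix_component[OF assms(1)])
  from has_derivative_det[OF this] show ?thesis
    by (simp add: det_replace_row[OF assms(2)] vector_matrix_mult_def sum_distrib_left mult.commute)
qed

lemma pd_eq_derivative: "(f has_derivative f') (at x) \<Longrightarrow> pd \<mu> f x = f' (axis \<mu> 1)"
  unfolding pd_def by (metis frechet_derivative_at)

lemma pd_sum:
  assumes "\<And>i. i \<in> S \<Longrightarrow> f i differentiable (at x)"
  shows "pd \<mu> (\<lambda>y. \<Sum>i\<in>S. f i y) x = (\<Sum>i\<in>S. pd \<mu> (f i) x)"
proof -
  have "((\<lambda>y. \<Sum>i\<in>S. f i y) has_derivative (\<lambda>v. \<Sum>i\<in>S. frechet_derivative (f i) (at x) v)) (at x)"
    using assms by (intro has_derivative_sum) (simp add: frechet_derivative_works)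
  from pd_eq_derivative[OF this] show ?thesis
    by (simp add: pd_def)
qed

lemma pd_mult:
  fixes f g :: "real^4 \<Rightarrow> real"
  assumes "f differentiable (at x)" "g differentiable (at x)"
  shows "pd \<mu> (\<lambda>y. f y * g y) x = pd \<mu> f x * g x + f x * pd \<mu> g x"
proof -
  have "((\<lambda>y. f y * g y) has_derivative
      (\<lambda>v. f x * frechet_derivative g (at x) v + frechet_derivative f (at x) v * g x)) (at x)"
    using assms by (intro has_derivative_mult) (simp_all add: frechet_derivative_works)
  from pd_eq_derivative[OF this] show ?thesis
    by (simp add: pd_def)
qed

lemma pd_matrix_component:
  assumes "M differentiable (at x)"
  shows "pd \<mu> (\<lambda>y. M y $ i $ j) x = pd \<mu> M x $ i $ j"
  using pd_eq_derivative[OF has_derivative_matrix_component] assms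
  by (simp add: pd_def frechet_derivative_works)

lemma matrix_component_differentiable:
  "M differentiable (at x) \<Longrightarrow> (\<lambda>y. M y $ i $ j) differentiable (at x)"
  unfolding differentiable_def by (blast intro: has_derivative_matrix_component)

lemma pd_linear_sum_scaleR:
  assumes "bounded_linear L" "\<And>a. bounded_linear (Z a)"
    and "\<And>a. w a differentiable (at x)" "\<psi> differentiable (at x)"
  shows "pd \<mu> (\<lambda>y. L (\<Sum>a\<in>S. w a y *\<^sub>R Z a (\<psi> y))) x
    = L (\<Sum>a\<in>S. pd \<mu> (w a) x *\<^sub>R Z a (\<psi> x) + w a x *\<^sub>R Z a (pd \<mu> \<psi> x))"
proof -
  have "((\<lambda>y. L (\<Sum>a\<in>S. w a y *\<^sub>R Z a (\<psi> y))) has_derivative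
      (\<lambda>v. L (\<Sum>a\<in>S. w a x *\<^sub>R Z a (frechet_derivative \<psi> (at x) v)
        + frechet_derivative (w a) (at x) v *\<^sub>R Z a (\<psi> x)))) (at x)"
    using assms
    by (intro bounded_linear.has_derivative[OF assms(1)] has_derivative_sum has_derivative_scaleR
        bounded_linear.has_derivative[OF assms(2)]) (simp_all add: frechet_derivative_works)
  from pd_eq_derivative[OF this] show ?thesis
    by (simp add: pd_def add.commute)
qed

lemma even_mv_pd:
  assumes "open U" "x \<in> U" "\<And>y. y \<in> U \<Longrightarrow> even_mv (\<psi> y)" "\<psi> differentiable (at x)"
  shows "even_mv (pd \<mu> \<psi> x)"
  unfolding even_mv_def
proof (intro allI impI)
  fix K :: "4 set"
  assume "odd (card K)"
  then have "\<psi> y $ K = 0" if "y \<in> U" for y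
    using assms(3)[OF that] by (simp add: even_mv_def)
  then have "((\<lambda>y. \<psi> y $ K) has_derivative (\<lambda>v. 0)) (at x)"
    using assms(1,2) by (intro has_derivative_transform_within_open[OF has_derivative_const]) auto
  moreover have "((\<lambda>y. \<psi> y $ K) has_derivative (\<lambda>v. frechet_derivative \<psi> (at x) v $ K)) (at x)"
    using assms(4) by (intro bounded_linear.has_derivative[OF bounded_linear_vec_nth])
      (simp add: frechet_derivative_works)
  ultimately show "pd \<mu> \<psi> x $ K = 0"
    unfolding pd_def by (metis has_derivative_unique)
qed

section \<open>The tetrad and the volume density\<close>

lemma hinv_right:
  assumes "invertible (h y)"
  shows "(\<Sum>\<nu>\<in>UNIV. h y $ b $ \<nu> * hinv h y $ \<nu> $ c) = of_bool (b = c)"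
proof -
  have "(h y ** matrix_inv (h y)) $ b $ c = mat 1 $ b $ c"
    by (simp add: matrix_inv_right[OF assms])
  then show ?thesis
    by (simp add: hinv_def matrix_matrix_mult_def mat_def)
qed

lemma hinv_left:
  assumes "invertible (h y)"
  shows "(\<Sum>b\<in>UNIV. hinv h y $ \<mu> $ b * h y $ b $ \<nu>) = of_bool (\<mu> = \<nu>)"
proof -
  have "(matrix_inv (h y) ** h y) $ \<mu> $ \<nu> = mat 1 $ \<mu> $ \<nu>"
    by (simp add: matrix_inv_left[OF assms])
  then show ?thesis
    by (simp add: hinv_def matrix_matrix_mult_def mat_def)
qed

(* By Cramer's rule the entries of the inverse tetrad are quotients of determinants. *)
lemma hinv_component_differentiable:
  assumes "open U" "x \<in> U" "\<And>y. y \<in> U \<Longrightarrow> invertible (h y)" "h differentiable (at x)"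
  shows "(\<lambda>y. hinv h y $ \<nu> $ i) differentiable (at x)"
proof -
  obtain h' where h': "(h has_derivative h') (at x)"
    using assms(4) by (auto simp: differentiable_def)
  let ?N = "\<lambda>y. (\<chi> j. if j = i then axis \<nu> 1 else h y $ j) :: real^4^4"
  have "((\<lambda>y. ?N y $ j $ k) has_derivative (\<lambda>v. if j = i then 0 else h' v $ j $ k)) (at x)" for j k
    by (cases "j = i") (auto intro: has_derivative_matrix_component[OF h'])
  then have "(\<lambda>y. det (?N y)) differentiable (at x)"
    by (rule has_derivative_det[THEN differentiableI])
  moreover have "(\<lambda>y. det (h y)) differentiable (at x)"
    using has_derivative_det_invertible[OF h'] assms(2,3) by (auto intro: differentiableI)
  ultimately have "(\<lambda>y. det (?N y) / det (h y)) differentiable (at x)"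
    using assms(2,3) by (simp add: invertible_det_nz)
  then obtain D where "((\<lambda>y. det (?N y) / det (h y)) has_derivative D) (at x)"
    by (auto simp: differentiable_def)
  moreover have "det (?N y) / det (h y) = hinv h y $ \<nu> $ i" if "y \<in> U" for y
    by (simp add: hinv_def matrix_inv_component assms(3) that)
  ultimately show ?thesis
    using assms(1,2) by (auto intro: differentiableI has_derivative_transform_within_open)
qed

lemma pd_hinv_right:
  assumes "open U" "x \<in> U" "\<And>y. y \<in> U \<Longrightarrow> invertible (h y)" "h differentiable (at x)"
  shows "(\<Sum>\<nu>\<in>UNIV. pd \<mu> h x $ b $ \<nu> * hinv h x $ \<nu> $ c + h x $ b $ \<nu> * pd \<mu> (\<lambda>y. hinv h y $ \<nu> $ c) x) = 0"
proof -
  let ?f = "\<lambda>y. \<Sum>\<nu>\<in>UNIV. h y $ b $ \<nu> * hinv h y $ \<nu> $ c"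
  have "?f y = of_bool (b = c)" if "y \<in> U" for y
    by (rule hinv_right) (rule assms(3)[OF that])
  then have "((\<lambda>y. \<Sum>\<nu>\<in>UNIV. h y $ b $ \<nu> * hinv h y $ \<nu> $ c) has_derivative (\<lambda>v. 0)) (at x)"
    using assms(1,2) by (intro has_derivative_transform_within_open[OF has_derivative_const]) auto
  then have "pd \<mu> ?f x = 0"
    by (simp add: pd_eq_derivative)
  moreover have "pd \<mu> ?f x = (\<Sum>\<nu>\<in>UNIV. pd \<mu> h x $ b $ \<nu> * hinv h x $ \<nu> $ c
      + h x $ b $ \<nu> * pd \<mu> (\<lambda>y. hinv h y $ \<nu> $ c) x)"
    using hinv_component_differentiable[OF assms] assms(4)
    by (simp add: pd_sum pd_mult pd_matrix_component matrix_component_differentiable)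
  ultimately show ?thesis
    by simp
qed

lemma prod_eta: "(\<Prod>k\<in>UNIV. eta k) = -1"
proof -
  have "(\<Prod>k\<in>UNIV. eta k) = eta 0 * (\<Prod>k\<in>UNIV - {0}. eta k)"
    by (simp add: prod.remove)
  also have "(\<Prod>k\<in>UNIV - {0}. eta k) = (-1) ^ card (UNIV - {0::4})"
    by (simp add: eta_def)
  finally show ?thesis
    by (simp add: eta_def card_Diff_singleton)
qed

lemma vol_eq_abs_det: "vol h y = \<bar>det (h y)\<bar>"
proof -
  let ?D = "(\<chi> i j. if i = j then eta i else 0) :: real^4^4"
  have "gmat h y = transpose (h y) ** ?D ** h y"
    by (simp add: vec_eq_iff gmat_def matrix_matrix_mult_def transpose_def if_distrib sum_distrib_right
        sum.delta cong: if_cong) (simp add: ac_simps)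
  moreover have "det ?D = -1"
    by (subst det_diagonal) (simp_all add: prod_eta)
  ultimately show ?thesis
    by (simp add: vol_def det_mul abs_mult)
qed

lemma has_derivative_vol:
  assumes "(h has_derivative h') (at x)" "invertible (h x)"
  shows "(vol h has_derivative
      (\<lambda>v. vol h x * (\<Sum>i\<in>UNIV. \<Sum>\<nu>\<in>UNIV. h' v $ i $ \<nu> * hinv h x $ \<nu> $ i))) (at x)"
proof -
  have "det (h x) \<noteq> 0"
    using assms(2) invertible_det_nz by blast
  from has_derivative_compose[OF has_derivative_det_invertible[OF assms] has_derivative_norm[OF this]]
  show ?thesis
    by (simp add: vol_eq_abs_det[abs_def] hinv_def abs_sgn ac_simps)
qed

lemma vol_differentiable: "h differentiable (at x) \<Longrightarrow> invertible (h x) \<Longrightarrow> vol h differentiable (at x)"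
  using has_derivative_vol unfolding differentiable_def by blast

lemma pd_vol:
  assumes "h differentiable (at x)" "invertible (h x)"
  shows "pd \<mu> (vol h) x = vol h x * (\<Sum>i\<in>UNIV. \<Sum>\<nu>\<in>UNIV. pd \<mu> h x $ i $ \<nu> * hinv h x $ \<nu> $ i)"
  using pd_eq_derivative[OF has_derivative_vol[OF assms(1)[unfolded frechet_derivative_works] assms(2)]]
  by (simp add: pd_def)

lemma vol_hinv_differentiable:
  assumes "open U" "x \<in> U" "\<And>y. y \<in> U \<Longrightarrow> invertible (h y)" "h differentiable (at x)"
  shows "(\<lambda>y. vol h y * hinv h y $ \<mu> $ a) differentiable (at x)"
  using assms vol_differentiable hinv_component_differentiable[OF assms] by simp

lemma sum_cstr_eq:
  assumes "open U" "x \<in> U" "\<And>y. y \<in> U \<Longrightarrow> invertible (h y)" "h differentiable (at x)"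
  shows "(\<Sum>b\<in>UNIV. cstr h x a b b)
    = - (\<Sum>\<mu>\<in>UNIV. hinv h x $ \<mu> $ a * (\<Sum>i\<in>UNIV. \<Sum>\<nu>\<in>UNIV. pd \<mu> h x $ i $ \<nu> * hinv h x $ \<nu> $ i))
      - (\<Sum>\<mu>\<in>UNIV. pd \<mu> (\<lambda>y. hinv h y $ \<mu> $ a) x)"
proof -
  let ?H = "\<lambda>\<nu> c. hinv h x $ \<nu> $ c" and ?h = "\<lambda>b \<nu>. h x $ b $ \<nu>"
  let ?dh = "\<lambda>\<mu> b \<nu>. pd \<mu> h x $ b $ \<nu>" and ?dH = "\<lambda>\<mu> \<nu> c. pd \<mu> (\<lambda>y. hinv h y $ \<nu> $ c) x"
  define tr where "tr \<mu> = (\<Sum>i\<in>UNIV. \<Sum>\<nu>\<in>UNIV. ?dh \<mu> i \<nu> * ?H \<nu> i)" for \<mu>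
  have per_row: "(\<Sum>\<nu>\<in>UNIV. ?h b \<nu> * ?dH \<mu> \<nu> b) = - (\<Sum>\<nu>\<in>UNIV. ?dh \<mu> b \<nu> * ?H \<nu> b)" for b \<mu>
    using pd_hinv_right[OF assms, of \<mu> b b] by (simp add: sum.distrib)
  have "(\<Sum>b\<in>UNIV. cstr h x a b b)
      = (\<Sum>b\<in>UNIV. \<Sum>\<nu>\<in>UNIV. \<Sum>\<mu>\<in>UNIV. ?h b \<nu> * ?H \<mu> a * ?dH \<mu> \<nu> b)
        - (\<Sum>b\<in>UNIV. \<Sum>\<nu>\<in>UNIV. \<Sum>\<mu>\<in>UNIV. ?H \<mu> b * ?h b \<nu> * ?dH \<mu> \<nu> a)"
    by (simp add: cstr_def right_diff_distrib sum_subtractf ac_simps)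
  also have "(\<Sum>b\<in>UNIV. \<Sum>\<nu>\<in>UNIV. \<Sum>\<mu>\<in>UNIV. ?h b \<nu> * ?H \<mu> a * ?dH \<mu> \<nu> b)
      = (\<Sum>\<mu>\<in>UNIV. ?H \<mu> a * (\<Sum>b\<in>UNIV. \<Sum>\<nu>\<in>UNIV. ?h b \<nu> * ?dH \<mu> \<nu> b))"
    by (subst sum_swap_inner, subst sum.swap) (simp add: sum_distrib_left ac_simps)
  also have "\<dots> = - (\<Sum>\<mu>\<in>UNIV. ?H \<mu> a * tr \<mu>)"
    by (simp add: per_row sum_negf tr_def)
  also have "(\<Sum>b\<in>UNIV. \<Sum>\<nu>\<in>UNIV. \<Sum>\<mu>\<in>UNIV. ?H \<mu> b * ?h b \<nu> * ?dH \<mu> \<nu> a)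
      = (\<Sum>\<mu>\<in>UNIV. \<Sum>\<nu>\<in>UNIV. (\<Sum>b\<in>UNIV. ?H \<mu> b * ?h b \<nu>) * ?dH \<mu> \<nu> a)"
    by (subst sum.swap, subst sum_swap_inner, subst sum.swap) (simp add: sum_distrib_right)
  also have "\<dots> = (\<Sum>\<mu>\<in>UNIV. ?dH \<mu> \<mu> a)"
    using assms(2,3) by (simp add: hinv_left[of h x])
  finally show ?thesis
    by (simp add: tr_def)
qed

(* This is where the structure coefficients, and through them the torsion, enter the field equation. *)
lemma frame_divergence:
  assumes "open U" "x \<in> U" "\<And>y. y \<in> U \<Longrightarrow> invertible (h y)" "h differentiable (at x)"
  shows "(\<Sum>\<mu>\<in>UNIV. pd \<mu> (\<lambda>y. vol h y * hinv h y $ \<mu> $ a) x) = - vol h x * (\<Sum>b\<in>UNIV. cstr h x a b b)"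
proof -
  define tr where "tr \<mu> = (\<Sum>i\<in>UNIV. \<Sum>\<nu>\<in>UNIV. pd \<mu> h x $ i $ \<nu> * hinv h x $ \<nu> $ i)" for \<mu>
  have invertible: "invertible (h x)"
    using assms(2,3) by blast
  have "pd \<mu> (\<lambda>y. vol h y * hinv h y $ \<mu> $ a) x
      = vol h x * (hinv h x $ \<mu> $ a * tr \<mu> + pd \<mu> (\<lambda>y. hinv h y $ \<mu> $ a) x)" for \<mu>
    by (simp add: pd_mult vol_differentiable hinv_component_differentiable[OF assms] assms(4) invertible
        pd_vol tr_def algebra_simps)
  then have sum_pd: "(\<Sum>\<mu>\<in>UNIV. pd \<mu> (\<lambda>y. vol h y * hinv h y $ \<mu> $ a) x)
      = vol h x * ((\<Sum>\<mu>\<in>UNIV. hinv h x $ \<mu> $ a * tr \<mu>) + (\<Sum>\<mu>\<in>UNIV. pd \<mu> (\<lambda>y. hinv h y $ \<mu> $ a) x))"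
    by (simp add: sum.distrib flip: sum_distrib_left)
  have sum_cstr: "(\<Sum>b\<in>UNIV. cstr h x a b b)
      = - (\<Sum>\<mu>\<in>UNIV. hinv h x $ \<mu> $ a * tr \<mu>) - (\<Sum>\<mu>\<in>UNIV. pd \<mu> (\<lambda>y. hinv h y $ \<mu> $ a) x)"
    unfolding tr_def by (rule sum_cstr_eq[OF assms])
  show ?thesis
    unfolding sum_pd sum_cstr by (simp add: algebra_simps)
qed

section \<open>The Lagrangian and its Euler--Lagrange expression\<close>

lemma bounded_linear_cmul_sandwich: "bounded_linear (\<lambda>P. cmul (cmul A P) B)"
  by (auto intro!: linearI simp: linear_conv_bounded_linear[symmetric] cmul_linear_simps)

definition kinetic_term :: "(real^4 \<Rightarrow> real^4^4) \<Rightarrow> real^4 \<Rightarrow> (4 \<Rightarrow> mv) \<Rightarrow> mv \<Rightarrow> mv" where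
  "kinetic_term h x Q G = (\<Sum>a\<in>UNIV. \<Sum>\<mu>\<in>UNIV. hinv h x $ \<mu> $ a *\<^sub>R cmul (cmul (gen a) (Q \<mu>)) G)"

lemma dirac_op_eq:
  "dirac_op h om x P Q G = kinetic_term h x Q G + cmul (cmul (connection_mv om x) P) G"
  by (simp add: dirac_op_def spin_cov_def kinetic_term_def connection_mv_def cmul_linear_simps
      sum.distrib scaleR_sum_right cmul_assoc)

lemma cmul_dirac_op: "cmul (dirac_op h om x P Q G) B = dirac_op h om x P Q (cmul G B)"
  by (simp add: dirac_op_def cmul_sum_left cmul_assoc)

lemma even_mv_dirac_op:
  assumes "even_mv P" "\<And>\<mu>. even_mv (Q \<mu>)" "odd_mv G"
  shows "even_mv (dirac_op h om x P Q G)"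
  unfolding dirac_op_def spin_cov_def
  by (intro even_mv_sum even_mv_cmul_odd[OF odd_mv_cmul_odd_even] odd_mv_gen even_mv_add even_mv_scaleR
      even_mv_cmul even_mv_omega_mv assms)

lemma sprod_sandwich_gamma021_adjoint:
  "sprod (cmul (cmul A B) gamma021) P = - sprod B (cmul (cmul (rev_mv A) P) gamma021)"
proof -
  have "sprod (cmul (cmul A B) gamma021) P = sprod (cmul A B) (cmul P (rev_mv gamma021))"
    by (rule sprod_cmul_right_adjoint)
  also have "\<dots> = sprod B (cmul (rev_mv A) (cmul P (rev_mv gamma021)))"
    by (rule sprod_cmul_left_adjoint)
  finally show ?thesis
    by (simp add: rev_mv_gamma021 cmul_linear_simps sprod_linear_simps cmul_assoc)
qed

lemma lagr_derivative_P:
  "((\<lambda>t. lagr h om m y (P + t *\<^sub>R b) Q) has_real_derivative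
     sprod (vol h y *\<^sub>R (dirac_op h om y P Q gamma021
       - cmul (cmul (rev_mv (connection_mv om y)) P) gamma021 - (2 * m) *\<^sub>R P)) b) (at 0)"
proof -
  let ?D = "dirac_op h om y P Q gamma021" and ?B = "cmul (cmul (connection_mv om y) b) gamma021"
  have "dirac_op h om y (P + t *\<^sub>R b) Q gamma021 = ?D + t *\<^sub>R ?B" for t
    by (simp add: dirac_op_eq cmul_linear_simps)
  then have "lagr h om m y (P + t *\<^sub>R b) Q = vol h y * ((sprod ?D P - m * sprod P P)
      + t * (sprod ?D b + sprod ?B P - 2 * m * sprod P b) + t\<^sup>2 * (sprod ?B b - m * sprod b b))" for t
    by (simp add: lagr_def sprod_linear_simps sprod_commute[of b P] algebra_simps power2_eq_square)
  then have "((\<lambda>t. lagr h om m y (P + t *\<^sub>R b) Q) has_real_derivative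
      vol h y * (sprod ?D b + sprod ?B P - 2 * m * sprod P b)) (at 0)"
    by (auto intro!: derivative_eq_intros)
  then show ?thesis
    by (simp add: sprod_sandwich_gamma021_adjoint sprod_linear_simps sprod_commute[of b] algebra_simps)
qed

lemma kinetic_term_update:
  "kinetic_term h y (Q(\<mu> := R + S)) G
    = kinetic_term h y (Q(\<mu> := R)) G + (\<Sum>a\<in>UNIV. hinv h y $ \<mu> $ a *\<^sub>R cmul (cmul (gen a) S) G)"
proof -
  have "(Q(\<mu> := R + S)) \<nu> = (Q(\<mu> := R)) \<nu> + of_bool (\<nu> = \<mu>) *\<^sub>R S" for \<nu>
    by simp
  then show ?thesis
    by (simp only: kinetic_term_def cmul_linear_simps scaleR_add_right sum.distrib scaleR_scaleR
        sum_scaleR_of_bool_eq_point)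
qed

lemma lagr_derivative_Q:
  "((\<lambda>t. lagr h om m y P (Q(\<mu> := R + t *\<^sub>R b))) has_real_derivative
     sprod (- (\<Sum>a\<in>UNIV. (vol h y * hinv h y $ \<mu> $ a) *\<^sub>R cmul (cmul (gen a) P) gamma021)) b) (at 0)"
proof -
  let ?K = "\<Sum>a\<in>UNIV. hinv h y $ \<mu> $ a *\<^sub>R cmul (cmul (gen a) b) gamma021"
  have "lagr h om m y P (Q(\<mu> := R + t *\<^sub>R b)) = lagr h om m y P (Q(\<mu> := R)) + t * (vol h y * sprod ?K P)" for t
    by (simp add: lagr_def dirac_op_eq kinetic_term_update cmul_linear_simps scaleR_sum_right
        sprod_linear_simps algebra_simps sum_distrib_left)
  then have "((\<lambda>t. lagr h om m y P (Q(\<mu> := R + t *\<^sub>R b))) has_real_derivative vol h y * sprod ?K P) (at 0)"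
    by (auto intro!: derivative_eq_intros)
  then show ?thesis
    by (simp add: sprod_sandwich_gamma021_adjoint sprod_linear_simps rev_mv_gen sum_distrib_left
        sprod_commute[of b] sum_negf algebra_simps)
qed

lemma mvderiv_lagr_P:
  "mvderiv_even (\<lambda>P'. lagr h om m y P' Q) P
    = even_part (vol h y *\<^sub>R (dirac_op h om y P Q gamma021
        - cmul (cmul (rev_mv (connection_mv om y)) P) gamma021 - (2 * m) *\<^sub>R P))"
  by (rule mvderiv_even_eqI) (rule lagr_derivative_P)

lemma mvderiv_lagr_Q:
  "mvderiv_even (\<lambda>R. lagr h om m y P (Q(\<mu> := R))) R0
    = - even_part (\<Sum>a\<in>UNIV. (vol h y * hinv h y $ \<mu> $ a) *\<^sub>R cmul (cmul (gen a) P) gamma021)"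
  by (simp add: mvderiv_even_eqI[OF lagr_derivative_Q] linear_neg[OF linear_even_part])

(* The connection term C appears in both parts of the Euler-Lagrange expression, while its
   reversal R enters with opposite signs and cancels. *)
lemma euler_lagrange_combination:
  fixes K C R T P :: "'a::real_vector"
  shows "v *\<^sub>R (K + C - R - (2 * m) *\<^sub>R P) + (v *\<^sub>R K + v *\<^sub>R (T + C + R))
    = (2 * v) *\<^sub>R (K + C + (1/2) *\<^sub>R T - m *\<^sub>R P)"
  by (simp add: algebra_simps flip: scaleR_2)

lemma divergence_momentum_eq:
  assumes "open U" "x \<in> U" "\<And>y. y \<in> U \<Longrightarrow> invertible (h y)" "h differentiable (at x)"
    and "\<psi> differentiable (at x)"
  shows "(\<Sum>\<mu>\<in>UNIV. pd \<mu> (\<lambda>y. mvderiv_even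
            (\<lambda>R. lagr h om m y (\<psi> y) ((\<lambda>\<nu>. pd \<nu> \<psi> y)(\<mu> := R))) (pd \<mu> \<psi> y)) x)
    = - even_part (vol h x *\<^sub>R kinetic_term h x (\<lambda>\<mu>. pd \<mu> \<psi> x) gamma021
        - vol h x *\<^sub>R cmul (cmul (\<Sum>a\<in>UNIV. (\<Sum>b\<in>UNIV. cstr h x a b b) *\<^sub>R gen a) (\<psi> x)) gamma021)"
proof -
  define S where "S X = cmul (cmul X (\<psi> x)) gamma021" for X
  have S_linear: "linear S"
    unfolding S_def by (intro linearI) (simp_all add: cmul_linear_simps)
  have "pd \<mu> (\<lambda>y. mvderiv_even (\<lambda>R. lagr h om m y (\<psi> y) ((\<lambda>\<nu>. pd \<nu> \<psi> y)(\<mu> := R))) (pd \<mu> \<psi> y)) x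
      = - even_part (\<Sum>a\<in>UNIV. pd \<mu> (\<lambda>y. vol h y * hinv h y $ \<mu> $ a) x *\<^sub>R S (gen a)
          + (vol h x * hinv h x $ \<mu> $ a) *\<^sub>R cmul (cmul (gen a) (pd \<mu> \<psi> x)) gamma021)" for \<mu>
    unfolding mvderiv_lagr_Q S_def
    by (rule pd_linear_sum_scaleR[where L = "\<lambda>X. - even_part X"])
      (auto intro: bounded_linear_minus bounded_linear_even_part
        bounded_linear_cmul_sandwich vol_hinv_differentiable[OF assms(1-4)] assms(5))
  then have "(\<Sum>\<mu>\<in>UNIV. pd \<mu> (\<lambda>y. mvderiv_even
          (\<lambda>R. lagr h om m y (\<psi> y) ((\<lambda>\<nu>. pd \<nu> \<psi> y)(\<mu> := R))) (pd \<mu> \<psi> y)) x)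
      = - even_part ((\<Sum>\<mu>\<in>UNIV. \<Sum>a\<in>UNIV. pd \<mu> (\<lambda>y. vol h y * hinv h y $ \<mu> $ a) x *\<^sub>R S (gen a))
          + (\<Sum>\<mu>\<in>UNIV. \<Sum>a\<in>UNIV. (vol h x * hinv h x $ \<mu> $ a) *\<^sub>R cmul (cmul (gen a) (pd \<mu> \<psi> x)) gamma021))"
    by (simp add: sum_negf sum.distrib linear_sum[OF linear_even_part, symmetric])
  also have "\<dots> = - even_part ((\<Sum>a\<in>UNIV. (\<Sum>\<mu>\<in>UNIV. pd \<mu> (\<lambda>y. vol h y * hinv h y $ \<mu> $ a) x) *\<^sub>R S (gen a))
          + (\<Sum>a\<in>UNIV. \<Sum>\<mu>\<in>UNIV. (vol h x * hinv h x $ \<mu> $ a) *\<^sub>R cmul (cmul (gen a) (pd \<mu> \<psi> x)) gamma021))"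
    by (subst (1 2) sum.swap) (simp add: scaleR_sum_left)
  also have "\<dots> = - even_part (vol h x *\<^sub>R kinetic_term h x (\<lambda>\<mu>. pd \<mu> \<psi> x) gamma021
      - vol h x *\<^sub>R S (\<Sum>a\<in>UNIV. (\<Sum>b\<in>UNIV. cstr h x a b b) *\<^sub>R gen a))"
    by (simp add: frame_divergence[OF assms(1-4)] kinetic_term_def scaleR_sum_right
        linear_sum[OF S_linear] linear_scale[OF S_linear] sum_negf)
  finally show ?thesis
    by (simp add: S_def)
qed

lemma euler_lagrange_eq:
  assumes "open U" "x \<in> U" "\<And>y. y \<in> U \<Longrightarrow> invertible (h y)" "h differentiable (at x)"
    and "\<And>a b c. om x a b c = - om x a c b"
    and "\<psi> differentiable (at x)" "\<And>y. y \<in> U \<Longrightarrow> even_mv (\<psi> y)"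
  shows "euler_lagrange h om m \<psi> x = (2 * vol h x) *\<^sub>R
    (dirac_op h om x (\<psi> x) (\<lambda>\<mu>. pd \<mu> \<psi> x) gamma021
      + (1/2) *\<^sub>R cmul (cmul (torsion_cov h om x) (\<psi> x)) gamma021 - m *\<^sub>R \<psi> x)"
    (is "_ = (2 * vol h x) *\<^sub>R ?dirac")
proof -
  define S where "S X = cmul (cmul X (\<psi> x)) gamma021" for X
  have S_linear: "linear S"
    unfolding S_def by (intro linearI) (simp_all add: cmul_linear_simps)
  let ?K = "kinetic_term h x (\<lambda>\<mu>. pd \<mu> \<psi> x) gamma021" and ?C = "connection_mv om x"
  have "- (\<Sum>a\<in>UNIV. (\<Sum>b\<in>UNIV. cstr h x a b b) *\<^sub>R gen a) = torsion_cov h om x + ?C + rev_mv ?C"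
    by (simp add: torsion_cov_eq[where om = om and x = x, OF assms(5)])
  then have torsion: "- S (\<Sum>a\<in>UNIV. (\<Sum>b\<in>UNIV. cstr h x a b b) *\<^sub>R gen a)
      = S (torsion_cov h om x) + S ?C + S (rev_mv ?C)"
    by (simp add: linear_add[OF S_linear] flip: linear_neg[OF S_linear])
  have "euler_lagrange h om m \<psi> x
      = even_part (vol h x *\<^sub>R (?K + S ?C - S (rev_mv ?C) - (2 * m) *\<^sub>R \<psi> x))
        + even_part (vol h x *\<^sub>R ?K + vol h x *\<^sub>R (S (torsion_cov h om x) + S ?C + S (rev_mv ?C)))"
    by (simp add: euler_lagrange_def mvderiv_lagr_P divergence_momentum_eq[OF assms(1-4,6)] dirac_op_eq
        flip: S_def torsion)
  also have "\<dots> = even_part ((2 * vol h x) *\<^sub>R ?dirac)"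
    by (simp only: linear_add[OF linear_even_part, symmetric] euler_lagrange_combination)
      (simp add: dirac_op_eq S_def)
  also have "\<dots> = (2 * vol h x) *\<^sub>R ?dirac"
  proof -
    have "even_mv (\<psi> x)" "even_mv (pd \<mu> \<psi> x)" for \<mu>
      using assms(2,7) even_mv_pd[OF assms(1,2,7,6)] by auto
    then have "even_mv ?dirac"
      by (intro even_mv_diff even_mv_add even_mv_scaleR even_mv_dirac_op odd_mv_gamma021
          even_mv_cmul_odd[OF odd_mv_cmul_odd_even[OF odd_mv_torsion_cov]])
    then show ?thesis
      by (simp add: linear_scale[OF linear_even_part] even_part_even_mv)
  qed
  finally show ?thesis .
qed

theorem mainTheorem7:
  fixes h :: "real^4 \<Rightarrow> real^4^4"
    and om :: "real^4 \<Rightarrow> 4 \<Rightarrow> 4 \<Rightarrow> 4 \<Rightarrow> real"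
    and m :: real
    and \<psi> :: "real^4 \<Rightarrow> mv"
    and U :: "(real^4) set"
    and x :: "real^4"
  assumes "open U"
    and "\<forall>y\<in>U. h differentiable (at y)"
    and "\<forall>y\<in>U. invertible (h y)"
    and "\<forall>y\<in>U. \<forall>a b c. om y a b c = - om y a c b"
    and "\<forall>y\<in>U. \<psi> differentiable (at y)"
    and "\<forall>y\<in>U. even_mv (\<psi> y)"
    and "x \<in> U"
  shows "(euler_lagrange h om m \<psi> x = 0 \<longleftrightarrow>
            dirac_op h om x (\<psi> x) (\<lambda>\<mu>. pd \<mu> \<psi> x) gamma021
            + (1/2) *\<^sub>R cmul (cmul (torsion_cov h om x) (\<psi> x)) gamma021
            - m *\<^sub>R \<psi> x = 0)
       \<and> (dirac_op h om x (\<psi> x) (\<lambda>\<mu>. pd \<mu> \<psi> x) gamma021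
            + (1/2) *\<^sub>R cmul (cmul (torsion_cov h om x) (\<psi> x)) gamma021
            - m *\<^sub>R \<psi> x = 0 \<longleftrightarrow>
          dirac_op h om x (\<psi> x) (\<lambda>\<mu>. pd \<mu> \<psi> x) gamma21
            + (1/2) *\<^sub>R cmul (cmul (torsion_cov h om x) (\<psi> x)) gamma21
            - m *\<^sub>R cmul (\<psi> x) (gen 0) = 0)
       \<and> (torsion_cov h om x = 0 \<longrightarrow>
          (euler_lagrange h om m \<psi> x = 0 \<longleftrightarrow>
           dirac_op h om x (\<psi> x) (\<lambda>\<mu>. pd \<mu> \<psi> x) gamma21
            - m *\<^sub>R cmul (\<psi> x) (gen 0) = 0))"
proof -
  let ?dirac = "\<lambda>G R. dirac_op h om x (\<psi> x) (\<lambda>\<mu>. pd \<mu> \<psi> x) G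
    + (1/2) *\<^sub>R cmul (cmul (torsion_cov h om x) (\<psi> x)) G - m *\<^sub>R R"
  have "euler_lagrange h om m \<psi> x = (2 * vol h x) *\<^sub>R ?dirac gamma021 (\<psi> x)"
  proof (rule euler_lagrange_eq)
    show "om x a b c = - om x a c b" for a b c
      using assms(4,7) by blast
  qed (use assms(1-3,5-7) in auto)
  moreover have "vol h x \<noteq> 0"
    using assms(3,7) by (simp add: vol_eq_abs_det invertible_det_nz)
  ultimately have euler_lagrange_iff: "euler_lagrange h om m \<psi> x = 0 \<longleftrightarrow> ?dirac gamma021 (\<psi> x) = 0"
    by simp
  have times_gen_0: "cmul (?dirac gamma021 (\<psi> x)) (gen 0) = ?dirac gamma21 (cmul (\<psi> x) (gen 0))"
    by (simp add: cmul_linear_simps cmul_dirac_op cmul_assoc cmul_gamma021_gen_0)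
  have "cmul (?dirac gamma21 (cmul (\<psi> x) (gen 0))) (gen 0) = ?dirac gamma021 (\<psi> x)"
    by (simp add: cmul_linear_simps cmul_dirac_op cmul_assoc cmul_gen_0_gen_0
        flip: cmul_gamma021_gen_0)
  with times_gen_0 have "?dirac gamma021 (\<psi> x) = 0 \<longleftrightarrow> ?dirac gamma21 (cmul (\<psi> x) (gen 0)) = 0"
    by (metis cmul_zero_left)
  with euler_lagrange_iff show ?thesis
    by simp
qed

end
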